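(* $\mathfrak{r}_{\mathrm{simult}} \le \max\{\mathfrak{r}_\sigma,\mathfrak{d}\}$.
   Context: For $x\subseteq\omega$ and $y\in[\omega]^\omega$, $y$ reaps $x$ if $y\subseteq^* x$ or $y\subseteq^*\omega\setminus x$ (where $A\subseteq^* B$ means $A\setminus B$ is finite). $\mathfrak{r}_\sigma$ is the least size of $\mathcal{A}\subseteq[\omega]^\omega$ such that for every sequence $\langle x_n:n\in\omega\rangle$ of subsets of $\omega$ there is $y\in\mathcal{A}$ reaping every $x_n$. $\mathfrak{d}$ is the dominating number. $\mathfrak{r}_{\mathrm{simult}}$ is the least size of a family $\mathcal{F}\subseteq([\omega]^\omega)^\omega$ such that for every sequence $\langle A_n\in[\omega]^\omega:n\in\omega\rangle$ there is $\langle B_n:n\in\omega\rangle\in\mathcal{F}$ such that either $B_0\subseteq\omega\setminus A_n$ for some $n$, or $B_n\subseteq A_n$ for all $n$. *)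

theory Defs
  imports Main
begin

definition almost_subset :: "nat set \<Rightarrow> nat set \<Rightarrow> bool" where
  "almost_subset A B \<longleftrightarrow> finite (A - B)"

text \<open>y reaps x (y is assumed infinite where used).\<close>
definition reaps :: "nat set \<Rightarrow> nat set \<Rightarrow> bool" where
  "reaps y x \<longleftrightarrow> almost_subset y x \<or> almost_subset y (UNIV - x)"

definition sigma_reaping_family :: "nat set set \<Rightarrow> bool" where
  "sigma_reaping_family \<A> \<longleftrightarrow>
     (\<forall>y\<in>\<A>. infinite y) \<and>
     (\<forall>x :: nat \<Rightarrow> nat set. \<exists>y\<in>\<A>. \<forall>n. reaps y (x n))"

definition dominating_family :: "(nat \<Rightarrow> nat) set \<Rightarrow> bool" where
  "dominating_family \<D> \<longleftrightarrow>
     (\<forall>f :: nat \<Rightarrow> nat. \<exists>g\<in>\<D>. \<forall>\<^sub>F n in sequentially. f n \<le> g n)"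

definition simult_family :: "(nat \<Rightarrow> nat set) set \<Rightarrow> bool" where
  "simult_family \<F> \<longleftrightarrow>
     (\<forall>B\<in>\<F>. \<forall>n. infinite (B n)) \<and>
     (\<forall>A :: nat \<Rightarrow> nat set. (\<forall>n. infinite (A n)) \<longrightarrow>
        (\<exists>B\<in>\<F>. (\<exists>n. B 0 \<subseteq> UNIV - A n) \<or> (\<forall>n. B n \<subseteq> A n)))"

end

theory Submission
  imports Defs
begin

text \<open>Given a \<sigma>-reaping family \<open>\<A>\<close> and a dominating family \<open>\<D>\<close>, take all sequences
  \<open>n \<mapsto> y - {..<h n + c}\<close> with \<open>y \<in> \<A>\<close>, \<open>h \<in> \<D>\<close>, \<open>c \<in> \<omega>\<close>. For a sequence \<open>A\<close> of
  infinite sets pick \<open>y \<in> \<A>\<close> reaping every \<open>A n\<close>. If \<open>y\<close> is almost disjoint from some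
  \<open>A n\<close>, a tail of \<open>y\<close> misses \<open>A n\<close>. Otherwise \<open>y\<close> is almost contained in every \<open>A n\<close>,
  say \<open>y - A n \<subseteq> {..<g n}\<close>, and an \<open>h \<in> \<D>\<close> dominating \<open>g\<close> (plus a constant absorbing
  the finitely many exceptions) cuts off all the bad points at once. The family has
  size at most \<open>|\<A> \<times> \<D> \<times> \<omega>| \<le> max |\<A>| |\<D>|\<close>, as \<open>\<D>\<close> is infinite.\<close>

unbundle cardinal_syntax

definition tail_sequences :: "nat set set \<Rightarrow> (nat \<Rightarrow> nat) set \<Rightarrow> (nat \<Rightarrow> nat set) set" where
  "tail_sequences \<A> \<D> = (\<lambda>(y, h, c) n. y - {..<h n + c}) ` (\<A> \<times> \<D> \<times> UNIV)"

lemma tail_sequences_memI: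
  "y \<in> \<A> \<Longrightarrow> h \<in> \<D> \<Longrightarrow> (\<lambda>n. y - {..<h n + c}) \<in> tail_sequences \<A> \<D>"
  unfolding tail_sequences_def by (intro image_eqI[where x = "(y, h, c)"]) auto

lemma almost_subset_imp_tail_subset:
  assumes "almost_subset y A"
  obtains k where "y - {..<k} \<subseteq> A"
proof -
  obtain k where "y - A \<subseteq> {..<k}"
    using assms finite_nat_set_iff_bounded unfolding almost_subset_def by auto
  then show thesis by (intro that) auto
qed

lemma eventually_le_imp_le_plus_const:
  fixes g h :: "nat \<Rightarrow> nat"
  assumes "\<forall>\<^sub>F n in sequentially. g n \<le> h n"
  obtains c where "\<And>n. g n \<le> h n + c"
proof -
  obtain N where N: "\<And>n. n \<ge> N \<Longrightarrow> g n \<le> h n"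
    using assms by (auto simp: eventually_sequentially)
  have "g n \<le> h n + (\<Sum>i<N. g i)" for n
  proof (cases "n < N")
    case True
    then have "g n \<le> (\<Sum>i<N. g i)" by (intro member_le_sum) auto
    then show ?thesis by simp
  next
    case False
    then show ?thesis using N[of n] by linarith
  qed
  then show thesis by (rule that)
qed

lemma dominating_family_infinite:
  assumes "dominating_family \<D>"
  shows "infinite \<D>"
proof
  assume fin: "finite \<D>"
  define f where "f n = Suc (\<Sum>g\<in>\<D>. g n)" for n
  obtain g where g: "g \<in> \<D>" "\<forall>\<^sub>F n in sequentially. f n \<le> g n"
    using assms unfolding dominating_family_def by blast
  then obtain N where "Suc (\<Sum>g\<in>\<D>. g N) \<le> g N"
    by (auto simp: eventually_sequentially f_def)
  moreover have "g N \<le> (\<Sum>g\<in>\<D>. g N)"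
    using fin g(1) by (intro member_le_sum) auto
  ultimately show False by simp
qed

lemma simult_family_tail_sequences:
  assumes \<A>: "sigma_reaping_family \<A>" and \<D>: "dominating_family \<D>"
  shows "simult_family (tail_sequences \<A> \<D>)"
  unfolding simult_family_def
proof (intro conjI ballI allI impI)
  fix B n
  assume "B \<in> tail_sequences \<A> \<D>"
  then obtain y h c where "y \<in> \<A>" "B = (\<lambda>n. y - {..<h n + c})"
    unfolding tail_sequences_def by auto
  then show "infinite (B n)"
    using \<A> unfolding sigma_reaping_family_def by auto
next
  fix A :: "nat \<Rightarrow> nat set"
  assume "\<forall>n. infinite (A n)"
  obtain y where y: "y \<in> \<A>" "\<And>n. reaps y (A n)"
    using \<A> unfolding sigma_reaping_family_def by blast
  show "\<exists>B\<in>tail_sequences \<A> \<D>. (\<exists>n. B 0 \<subseteq> UNIV - A n) \<or> (\<forall>n. B n \<subseteq> A n)"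
  proof (cases "\<exists>n. almost_subset y (UNIV - A n)")
    case True
    then obtain n where "almost_subset y (UNIV - A n)" ..
    then obtain k where k: "y - {..<k} \<subseteq> UNIV - A n"
      by (rule almost_subset_imp_tail_subset)
    obtain h where h: "h \<in> \<D>"
      using dominating_family_infinite[OF \<D>] by (metis finite.emptyI ex_in_conv)
    have "y - {..<h 0 + k} \<subseteq> UNIV - A n"
      using k by auto
    then show ?thesis
      by (intro bexI[OF _ tail_sequences_memI[OF y(1) h]]) auto
  next
    case False
    then have "almost_subset y (A n)" for n
      using y(2) unfolding reaps_def by blast
    then have "\<exists>k. y - {..<k} \<subseteq> A n" for n
      by (meson almost_subset_imp_tail_subset)
    then obtain g where g: "\<And>n. y - {..<g n} \<subseteq> A n"
      by metis
    obtain h where h: "h \<in> \<D>" "\<forall>\<^sub>F n in sequentially. g n \<le> h n"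
      using \<D> unfolding dominating_family_def by blast
    obtain c where c: "\<And>n. g n \<le> h n + c"
      using eventually_le_imp_le_plus_const[OF h(2)] by blast
    have "y - {..<h n + c} \<subseteq> y - {..<g n}" for n
      using c[of n] by auto
    with g have "y - {..<h n + c} \<subseteq> A n" for n
      by blast
    then show ?thesis
      by (intro bexI[OF _ tail_sequences_memI[OF y(1) h(1)]]) auto
  qed
qed

lemma card_of_Times_Times_nat_ordLeq_infinite:
  fixes M :: "'a set"
  assumes "infinite M" "|X| \<le>o |M|" "|Y| \<le>o |M|"
  shows "|X \<times> Y \<times> (UNIV :: nat set)| \<le>o |M|"
proof -
  have "|UNIV :: nat set| \<le>o |M|"
    using assms(1) infinite_iff_card_of_nat by blast
  then have "|Y \<times> (UNIV :: nat set)| \<le>o |M|"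
    using card_of_Times_ordLeq_infinite_Field[of "|M|" Y "UNIV :: nat set"] assms
    by (simp add: Field_card_of card_of_Card_order card_of_card_order_on)
  then show ?thesis
    using card_of_Times_ordLeq_infinite_Field[of "|M|" X] assms
    by (simp add: Field_card_of card_of_Card_order card_of_card_order_on)
qed

lemma card_of_tail_sequences:
  fixes \<A> :: "nat set set" and \<D> :: "(nat \<Rightarrow> nat) set"
  assumes "infinite \<D>"
  shows "|tail_sequences \<A> \<D>| \<le>o |\<A>| \<or> |tail_sequences \<A> \<D>| \<le>o |\<D>|"
proof -
  have image: "|tail_sequences \<A> \<D>| \<le>o |\<A> \<times> \<D> \<times> (UNIV :: nat set)|"
    unfolding tail_sequences_def by (rule card_of_image)
  consider "|\<A>| \<le>o |\<D>|" | "|\<D>| \<le>o |\<A>|"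
    using ordLeq_total[OF card_of_Well_order card_of_Well_order] by blast
  then show ?thesis
  proof cases
    case 1
    then have "|\<A> \<times> \<D> \<times> (UNIV :: nat set)| \<le>o |\<D>|"
      using card_of_Times_Times_nat_ordLeq_infinite[OF assms _ ordLeq_refl[OF card_of_Card_order]]
      by blast
    then show ?thesis using image ordLeq_transitive by blast
  next
    case 2
    then have "infinite \<A>" using card_of_ordLeq_infinite assms by blast
    then have "|\<A> \<times> \<D> \<times> (UNIV :: nat set)| \<le>o |\<A>|"
      using card_of_Times_Times_nat_ordLeq_infinite[OF _ ordLeq_refl[OF card_of_Card_order] 2]
      by blast
    then show ?thesis using image ordLeq_transitive by blast
  qed
qed

theorem mainTheorem6:
  fixes \<A> :: "nat set set" and \<D> :: "(nat \<Rightarrow> nat) set"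
  assumes "sigma_reaping_family \<A>" and "dominating_family \<D>"
  shows "\<exists>\<F>. simult_family \<F> \<and>
           ((card_of \<F>, card_of \<A>) \<in> ordLeq \<or> (card_of \<F>, card_of \<D>) \<in> ordLeq)"
  using simult_family_tail_sequences[OF assms]
    card_of_tail_sequences[OF dominating_family_infinite[OF assms(2)], of \<A>]
  by blast

end
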